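(* Let $L$ be a frame and for $a\in L$ write $\mathfrak c_f(a)=\{x\in L\mid x\vee a=1\}$. Then: (1) $L$ is subfit if and only if for every $a\in L$ the supplement of $\mathfrak c_f(a)$ in $\mathsf{Filt}(L)$ equals ${\uparrow}a$, i.e. $\{b\in L\mid\forall x\in\mathfrak c_f(a),\ b\vee x=1\}={\uparrow}a$; (2) $L$ is a Boolean algebra if and only if for every $a\in L$, ${\uparrow}a\sqcap\mathfrak c_f(a)=L$, i.e. $\{f\wedge g\mid f\in{\uparrow}a,\ g\in\mathfrak c_f(a)\}=L$.
   Context: A frame is a complete lattice $L$ with $(\bigvee A)\wedge b=\bigvee_{a\in A}(a\wedge b)$. $L$ is subfit if for all $a,b$: whenever ($\forall c$, $a\vee c=1\Rightarrow b\vee c=1$) then $a\le b$. $\mathsf{Filt}(L)$ is the set of filters (nonempty up-closed subsets closed under finite meets) ordered by reverse inclusion $\sqsubseteq$; it is a coframe with least element $L$, greatest element $\{1\}$, binary meet $F\sqcap G=\{f\wedge g\mid f\in F,g\in G\}$, difference $H\setminus G=\{a\mid\forall b\in G,\ b\vee a\in H\}$, and supplement $F^\#=\{1\}\setminus F$. *)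

theory Defs
  imports Main
begin

definition frame :: "'a::complete_lattice itself \<Rightarrow> bool" where
  "frame _ \<longleftrightarrow> (\<forall>(A::'a set) b. inf (Sup A) b = Sup ((\<lambda>a. inf a b) ` A))"

definition subfit :: "'a::complete_lattice itself \<Rightarrow> bool" where
  "subfit _ \<longleftrightarrow> (\<forall>a b::'a. (\<forall>c. sup a c = top \<longrightarrow> sup b c = top) \<longrightarrow> a \<le> b)"

text \<open>A (bounded distributive) lattice is a Boolean algebra iff every element has a complement.\<close>
definition is_boolean :: "'a::complete_lattice itself \<Rightarrow> bool" where
  "is_boolean _ \<longleftrightarrow> (\<forall>a::'a. \<exists>c. inf a c = bot \<and> sup a c = top)"

text \<open>Operations on filters (Filt(L) ordered by reverse inclusion).\<close>
definition filt_meet :: "'a::complete_lattice set \<Rightarrow> 'a set \<Rightarrow> 'a set" where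
  "filt_meet F G = {inf f g | f g. f \<in> F \<and> g \<in> G}"

definition filt_diff :: "'a::complete_lattice set \<Rightarrow> 'a set \<Rightarrow> 'a set" where
  "filt_diff H G = {a. \<forall>b\<in>G. sup b a \<in> H}"

definition filt_supp :: "'a::complete_lattice set \<Rightarrow> 'a set" where
  "filt_supp F = filt_diff {top} F"

definition cf :: "'a::complete_lattice \<Rightarrow> 'a set" where
  "cf a = {x. sup x a = top}"

definition upset :: "'a::complete_lattice \<Rightarrow> 'a set" where
  "upset a = {b. a \<le> b}"

end

theory Submission
  imports Defs
begin

text \<open>
  The supplement of \<open>cf a\<close> is the set of \<open>b\<close> with \<open>a \<squnion> c = 1 \<Longrightarrow> b \<squnion> c = 1\<close> for all \<open>c\<close>;
  it always contains \<open>\<up>a\<close>, and the reverse inclusion for every \<open>a\<close> is subfitness verbatim.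
  For (2), a complement \<open>c\<close> of \<open>a\<close> writes every \<open>y\<close> as \<open>(y \<squnion> a) \<sqinter> (y \<squnion> c)\<close> by
  distributivity, with \<open>y \<squnion> c \<in> cf a\<close>; conversely, writing \<open>0 = f \<sqinter> g\<close> with \<open>a \<le> f\<close> and
  \<open>g \<in> cf a\<close> makes \<open>g\<close> a complement of \<open>a\<close>.
\<close>

lemma frame_inf_sup_distrib:
  assumes "frame TYPE('a::complete_lattice)"
  shows "inf (sup x y) b = sup (inf x b) (inf y (b::'a))"
proof -
  have "inf (Sup {x, y}) b = Sup ((\<lambda>a. inf a b) ` {x, y})"
    using assms unfolding frame_def by blast
  then show ?thesis by simp
qed

lemma frame_sup_inf_distrib:
  assumes "frame TYPE('a::complete_lattice)"
  shows "inf (sup y a) (sup y c) = sup y (inf a (c::'a))"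
proof -
  have "inf (sup y a) (sup y c) = sup (inf y (sup y c)) (inf a (sup y c))"
    by (rule frame_inf_sup_distrib[OF assms])
  also have "inf a (sup y c) = sup (inf y a) (inf c a)"
    using frame_inf_sup_distrib[OF assms, of y c a] by (simp add: inf_commute)
  finally show ?thesis
    by (simp add: inf_absorb1 inf_commute sup_absorb1 le_infI2 flip: sup_assoc)
qed

lemma filt_supp_cf:
  "filt_supp (cf a) = {b. \<forall>c. sup a c = top \<longrightarrow> sup b c = top}"
  unfolding filt_supp_def filt_diff_def cf_def by (auto simp: sup_commute)

lemma upset_subset_filt_supp_cf: "upset a \<subseteq> filt_supp (cf a)"
proof
  fix b assume "b \<in> upset a"
  then have "sup a c \<le> sup b c" for c by (simp add: upset_def le_supI1)
  then have "sup a c = top \<Longrightarrow> sup b c = top" for c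
    using top_unique by metis
  then show "b \<in> filt_supp (cf a)"
    unfolding filt_supp_cf by blast
qed

lemma subfit_iff_filt_supp_cf_eq_upset:
  "subfit TYPE('a::complete_lattice) \<longleftrightarrow> (\<forall>a::'a. filt_supp (cf a) = upset a)"
proof
  assume "subfit TYPE('a)"
  then have "filt_supp (cf a) \<subseteq> upset a" for a :: 'a
    unfolding subfit_def filt_supp_cf upset_def by blast
  then show "\<forall>a::'a. filt_supp (cf a) = upset a"
    using upset_subset_filt_supp_cf by blast
next
  assume "\<forall>a::'a. filt_supp (cf a) = upset a"
  then show "subfit TYPE('a)"
    unfolding subfit_def filt_supp_cf upset_def by blast
qed

lemma filt_meet_upset_cf_eq_UNIV_if_complement:
  assumes "frame TYPE('a::complete_lattice)"
    and "inf a c = bot" "sup a (c::'a) = top"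
  shows "filt_meet (upset a) (cf a) = UNIV"
proof -
  have "y \<in> filt_meet (upset a) (cf a)" for y
  proof -
    have "inf (sup y a) (sup y c) = y"
      using frame_sup_inf_distrib[OF assms(1)] assms(2) by simp
    moreover have "sup (sup y c) a = top"
      using assms(3) by (metis sup.commute sup.left_commute sup_top_right)
    ultimately show ?thesis
      unfolding filt_meet_def upset_def cf_def
      by (intro CollectI exI[of _ "sup y a"] exI[of _ "sup y c"]) auto
  qed
  then show ?thesis by blast
qed

lemma complement_if_bot_in_filt_meet_upset_cf:
  assumes "bot \<in> filt_meet (upset a) (cf a)"
  shows "\<exists>c. inf a c = bot \<and> sup a c = top"
proof -
  from assms obtain f g where fg: "bot = inf f g" "a \<le> f" "sup g a = top"
    unfolding filt_meet_def upset_def cf_def by blast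
  then have "inf a g = bot"
    by (metis bot_unique inf_mono order_refl)
  with fg(3) show ?thesis by (auto simp: sup_commute)
qed

lemma is_boolean_iff_filt_meet_upset_cf_eq_UNIV:
  assumes "frame TYPE('a::complete_lattice)"
  shows "is_boolean TYPE('a) \<longleftrightarrow> (\<forall>a::'a. filt_meet (upset a) (cf a) = UNIV)"
  unfolding is_boolean_def
  using filt_meet_upset_cf_eq_UNIV_if_complement[OF assms]
    complement_if_bot_in_filt_meet_upset_cf
  by blast

theorem mainTheorem19:
  assumes "frame TYPE('a::complete_lattice)"
  shows "(subfit TYPE('a) \<longleftrightarrow> (\<forall>a::'a. filt_supp (cf a) = upset a))
       \<and> (is_boolean TYPE('a) \<longleftrightarrow> (\<forall>a::'a. filt_meet (upset a) (cf a) = UNIV))"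
  using subfit_iff_filt_supp_cf_eq_upset is_boolean_iff_filt_meet_upset_cf_eq_UNIV[OF assms]
  by blast

end
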